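(* Let $D$ be a digraph without parallel edges, let $X\subseteq E(D)$, let $S$ be a set with $|S|=k$, and let $\lambda_1:E(D)\setminus X\to S$ and $\lambda_2:X\to S$. If $(E(D)\setminus X, X)$, viewed as a partition of the vertex set of $\vec{L}(D)$, is $(\lambda_1,\lambda_2)$-consistent in $\vec{L}(D)$, then $|S^V_X|\le 4k$.
   Context: All digraphs are finite and loopless. The directed line graph $\vec{L}(D)$ has vertex set $E(D)$ and an edge $\vec{ef}$ whenever $e=\vec{wx}$ and $f=\vec{xy}$ for some vertices $w,x,y$ of $D$. For $X\subseteq E(D)$, $S^V_X=\{y\in V(D): \exists x,z \text{ with } \vec{xy}\in E(D)\setminus X \text{ and } \vec{yz}\in X\}$. For a digraph $H$, a partition $(A,B)$ of $V(H)$ and functions $\lambda_A:A\to S$, $\lambda_B:B\to S$, $(A,B)$ is $(\lambda_A,\lambda_B)$-consistent if (i) for all $a_1,a_2\in A$ with $\lambda_A(a_1)=\lambda_A(a_2)$ and all $b\in B$: $\vec{a_1b}\in E(H)$ iff $\vec{a_2b}\in E(H)$; and (ii) for all $b_1,b_2\in B$ with $\lambda_B(b_1)=\lambda_B(b_2)$ and all $a\in A$: $\vec{ab_1}\in E(H)$ iff $\vec{ab_2}\in E(H)$. *)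

theory Defs
  imports Main
begin

(* A digraph D without parallel edges: finite vertex set V, edge set E \<subseteq> V \<times> V
   (edges are ordered pairs, so no parallel edges), loopless. *)
definition simple_digraph :: "'v set \<Rightarrow> ('v \<times> 'v) set \<Rightarrow> bool" where
  "simple_digraph V E \<longleftrightarrow> finite V \<and> E \<subseteq> V \<times> V \<and> (\<forall>v. (v, v) \<notin> E)"

definition line_adj :: "('v \<times> 'v) set \<Rightarrow> ('v \<times> 'v) \<Rightarrow> ('v \<times> 'v) \<Rightarrow> bool" where
  "line_adj E e f \<longleftrightarrow> e \<in> E \<and> f \<in> E \<and> (\<exists>w x y. e = (w, x) \<and> f = (x, y))"

definition SVX :: "('v \<times> 'v) set \<Rightarrow> ('v \<times> 'v) set \<Rightarrow> 'v set" where
  "SVX E X = {y. \<exists>x z. (x, y) \<in> E - X \<and> (y, z) \<in> X}"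

definition consistent ::
  "('a \<Rightarrow> 'a \<Rightarrow> bool) \<Rightarrow> 'a set \<Rightarrow> 'a set \<Rightarrow> ('a \<Rightarrow> 's) \<Rightarrow> ('a \<Rightarrow> 's) \<Rightarrow> bool" where
  "consistent adj A B lamA lamB \<longleftrightarrow>
     (\<forall>a1\<in>A. \<forall>a2\<in>A. lamA a1 = lamA a2 \<longrightarrow> (\<forall>b\<in>B. adj a1 b \<longleftrightarrow> adj a2 b)) \<and>
     (\<forall>b1\<in>B. \<forall>b2\<in>B. lamB b1 = lamB b2 \<longrightarrow> (\<forall>a\<in>A. adj a b1 \<longleftrightarrow> adj a b2))"

end

theory Submission
  imports Defs
begin

text \<open>Every vertex y of S^V_X has an in-edge e in E(D) - X and an out-edge f in X, and ef is an
  edge of the line graph. If in-edges e, e' into y, y' of S^V_X carry the same label, consistency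
  makes e'f an edge as well, forcing y' = y. So labelling each such y by the label of one of its
  in-edges is injective, and in fact card S^V_X \<le> k.\<close>

lemma SVX_iff: "y \<in> SVX E X \<longleftrightarrow> (\<exists>x. (x, y) \<in> E - X) \<and> (\<exists>z. (y, z) \<in> X)"
  by (auto simp: SVX_def)

lemma consistent_same_label_same_head:
  assumes cons: "consistent (line_adj E) (E - X) X lam1 lam2" and "X \<subseteq> E"
    and e: "(x, y) \<in> E - X" and e': "(x', y') \<in> E - X" and f: "(y, z) \<in> X"
    and same_label: "lam1 (x, y) = lam1 (x', y')"
  shows "y' = y"
proof -
  have "line_adj E (x, y) (y, z)"
    using e f \<open>X \<subseteq> E\<close> by (auto simp: line_adj_def)
  moreover have "line_adj E (x, y) (y, z) \<longleftrightarrow> line_adj E (x', y') (y, z)"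
    using cons e e' f same_label unfolding consistent_def by metis
  ultimately have "line_adj E (x', y') (y, z)" by simp
  then show ?thesis by (simp add: line_adj_def)
qed

lemma card_SVX_le_card_labels:
  assumes cons: "consistent (line_adj E) (E - X) X lam1 lam2" and "X \<subseteq> E"
    and "finite S" and labels: "\<forall>e\<in>E - X. lam1 e \<in> S"
  shows "card (SVX E X) \<le> card S"
proof -
  define in_edge where "in_edge y = (SOME e. e \<in> E - X \<and> snd e = y)" for y
  have in_edge: "in_edge y \<in> E - X \<and> snd (in_edge y) = y" if "y \<in> SVX E X" for y
  proof -
    from that obtain x where "(x, y) \<in> E - X" by (auto simp: SVX_iff)
    then have "\<exists>e. e \<in> E - X \<and> snd e = y" by force
    then show ?thesis unfolding in_edge_def by (rule someI_ex)
  qed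
  have "inj_on (lam1 \<circ> in_edge) (SVX E X)"
  proof (rule inj_onI)
    fix y y' assume y: "y \<in> SVX E X" and y': "y' \<in> SVX E X"
      and same_label: "(lam1 \<circ> in_edge) y = (lam1 \<circ> in_edge) y'"
    obtain x where x: "in_edge y = (x, y)"
      using in_edge[OF y] by (metis prod.collapse)
    obtain x' where x': "in_edge y' = (x', y')"
      using in_edge[OF y'] by (metis prod.collapse)
    obtain z where z: "(y, z) \<in> X"
      using y by (auto simp: SVX_iff)
    have "(x, y) \<in> E - X" "(x', y') \<in> E - X" "lam1 (x, y) = lam1 (x', y')"
      using in_edge[OF y] in_edge[OF y'] same_label x x' by simp_all
    then show "y = y'"
      using consistent_same_label_same_head[OF cons \<open>X \<subseteq> E\<close> _ _ z] by metis
  qed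
  moreover have "(lam1 \<circ> in_edge) ` SVX E X \<subseteq> S"
    using in_edge labels by auto
  ultimately show ?thesis
    using \<open>finite S\<close> by (rule card_inj_on_le)
qed

theorem mainTheorem3:
  fixes V :: "'v set" and E X :: "('v \<times> 'v) set" and S :: "'s set" and k :: nat
    and lam1 lam2 :: "('v \<times> 'v) \<Rightarrow> 's"
  assumes "simple_digraph V E"
    and "X \<subseteq> E"
    and "finite S" and "card S = k"
    and "\<forall>e\<in>E - X. lam1 e \<in> S"
    and "\<forall>e\<in>X. lam2 e \<in> S"
    and "consistent (line_adj E) (E - X) X lam1 lam2"
  shows "card (SVX E X) \<le> 4 * k"
proof -
  have "card (SVX E X) \<le> card S"
    using assms(7,2,3,5) by (rule card_SVX_le_card_labels)
  then show ?thesis using \<open>card S = k\<close> by simp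
qed

end
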